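(* Let $\mathcal S\subseteq\mathbb R^n$ be a convex set whose recession cone $\mathbf K:=\mathrm{rec.cone}(\mathcal S)$ is regular, and let $\Psi:=\Psi_{\mathbf K,\|\cdot\|_2}$. Then for every $\hat x\in\mathcal S$, $$\inf_{x\in\mathcal S\cap\mathbb Z^n}\|x-\hat x\|_2\le \frac{\sqrt n}{2}\Big(\frac1{\Psi}+1\Big),$$ and in fact there exists $x\in\mathcal S\cap\mathbb Z^n$ attaining $\|x-\hat x\|_2\le\frac{\sqrt n}{2}(\frac1\Psi+1)$. Moreover, if $\alpha\in\mathbb R^n$ and $\hat z:=\inf\{\alpha^Tx:x\in\mathcal S\}>-\infty$, then $$\inf\{\alpha^Tx:x\in\mathcal S\cap\mathbb Z^n\}-\hat z\le\|\alpha\|_2\frac{\sqrt n}{2}\Big(\frac1{\Psi}+1\Big).$$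
   Context: The recession cone of a convex set $\mathcal S$ is $\mathrm{rec.cone}(\mathcal S)=\{d: x+\lambda d\in\mathcal S\ \forall\lambda\ge0,\ \forall x\in\mathcal S\}$. A cone is regular if it is full-dimensional, closed, convex and pointed. For a regular cone $\mathbf K$ with dual cone $\mathbf K_*=\{x: x^Ty\ge0\ \forall y\in\mathbf K\}$, $\Psi_{\mathbf K,\|\cdot\|_2}:=\max_{d\in\mathbf K,\|d\|_2=1}\min_{f\in\mathbf K_*,\|f\|_2=1}f^Td$. *)

theory Defs
  imports "HOL-Analysis.Analysis"
begin

definition rec_cone :: "('a::real_vector) set \<Rightarrow> 'a set" where
  "rec_cone S = {d. \<forall>x\<in>S. \<forall>t::real. t \<ge> 0 \<longrightarrow> x + t *\<^sub>R d \<in> S}"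

definition regular_cone :: "('a::euclidean_space) set \<Rightarrow> bool" where
  "regular_cone K \<longleftrightarrow> cone K \<and> interior K \<noteq> {} \<and> closed K \<and> convex K \<and>
     K \<inter> uminus ` K = {0}"

definition dual_cone :: "('a::euclidean_space) set \<Rightarrow> 'a set" where
  "dual_cone K = {x. \<forall>y\<in>K. x \<bullet> y \<ge> 0}"

definition Psi :: "('a::euclidean_space) set \<Rightarrow> real" where
  "Psi K = (SUP d\<in>{d\<in>K. norm d = 1}. (INF f\<in>{f\<in>dual_cone K. norm f = 1}. f \<bullet> d))"

definition int_points :: "(real^'n) set" where
  "int_points = {x. \<forall>i. x $ i \<in> \<int>}"

end

theory Submission
  imports Defs
begin

text \<open>Let \<open>d\<close> be a unit vector of \<open>K\<close> attaining \<open>\<Psi>\<close> (it exists by compactness, and \<open>\<Psi> > 0\<close>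
  because \<open>K\<close> has interior points). Every unit functional of \<open>K\<^sub>*\<close> is at least \<open>r\<close> on
  \<open>(r/\<Psi>) d\<close>, so by separation the ball of radius \<open>r\<close> around \<open>(r/\<Psi>) d\<close> lies in \<open>K\<close>. For
  \<open>r = \<surd>n/2\<close> the ball \<open>x\<^sub>0 + (r/\<Psi>) d + cball 0 r\<close> contains an integer point (round the
  centre), and it lies in \<open>x\<^sub>0 + K \<subseteq> S\<close>. The objective bound follows by applying this to
  nearly optimal \<open>x\<^sub>0\<close>.\<close>

definition dual_margin :: "'a::euclidean_space set \<Rightarrow> 'a \<Rightarrow> real" where
  "dual_margin K d = (INF f\<in>{f\<in>dual_cone K. norm f = 1}. f \<bullet> d)"

lemma Psi_eq_SUP_dual_margin:
  "Psi K = (SUP d\<in>{d\<in>K. norm d = 1}. dual_margin K d)"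
  by (simp add: Psi_def dual_margin_def)

lemma dual_cone_separation:
  fixes K :: "'a::euclidean_space set"
  assumes "cone K" "closed K" "convex K" "K \<noteq> {}" "z \<notin> K"
  shows "\<exists>f\<in>dual_cone K. norm f = 1 \<and> f \<bullet> z < 0"
proof -
  obtain a b where ab: "a \<bullet> z < b" "\<forall>x\<in>K. b < a \<bullet> x"
    using separating_hyperplane_closed_point[OF assms(3,2,5)] by blast
  have "0 \<in> K" using cone_contains_0[OF assms(1)] assms(4) by simp
  then have b0: "b < 0" using ab(2) by fastforce
  have a_dual: "a \<bullet> x \<ge> 0" if "x \<in> K" for x
  proof (rule ccontr)
    assume "\<not> a \<bullet> x \<ge> 0"
    then have neg: "a \<bullet> x < 0" by simp
    define c where "c = b / (a \<bullet> x)"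
    have "c > 0" using neg b0 by (simp add: c_def divide_neg_neg)
    then have "c *\<^sub>R x \<in> K" using assms(1) that by (simp add: cone_def)
    then have "b < a \<bullet> (c *\<^sub>R x)" using ab by blast
    also have "a \<bullet> (c *\<^sub>R x) = b" using neg by (simp add: c_def)
    finally show False by simp
  qed
  have "a \<noteq> 0" using ab b0 by auto
  then show ?thesis using a_dual ab b0
    by (intro bexI[of _ "a /\<^sub>R norm a"]) (auto simp: dual_cone_def mult_pos_neg)
qed

lemma cball_subset_cone_if_dual_bound:
  fixes K :: "'a::euclidean_space set"
  assumes "cone K" "closed K" "convex K" "K \<noteq> {}"
    and "\<And>f. f \<in> dual_cone K \<Longrightarrow> norm f = 1 \<Longrightarrow> r \<le> f \<bullet> c"
  shows "cball c r \<subseteq> K"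
proof
  fix z assume z: "z \<in> cball c r"
  show "z \<in> K"
  proof (rule ccontr)
    assume "z \<notin> K"
    then obtain f where f: "f \<in> dual_cone K" "norm f = 1" "f \<bullet> z < 0"
      using dual_cone_separation assms(1-4) by blast
    have "\<bar>f \<bullet> (z - c)\<bar> \<le> norm f * norm (z - c)" by (rule Cauchy_Schwarz_ineq2)
    also have "\<dots> \<le> r" using z f(2) by (simp add: dist_norm norm_minus_commute)
    finally show False using assms(5)[OF f(1,2)] f(3) by (simp add: inner_diff_right)
  qed
qed

lemma dual_margin_le:
  assumes "f \<in> dual_cone K" "norm f = 1"
  shows "dual_margin K d \<le> f \<bullet> d"
  unfolding dual_margin_def
proof (rule cINF_lower)
  show "bdd_below ((\<lambda>f. f \<bullet> d) ` {f \<in> dual_cone K. norm f = 1})"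
  proof (rule bdd_belowI2[where m="- norm d"])
    fix f assume "f \<in> {f \<in> dual_cone K. norm f = 1}"
    then show "- norm d \<le> f \<bullet> d" using Cauchy_Schwarz_ineq2[of f d] by simp
  qed
qed (use assms in simp)

lemma dual_margin_greatest:
  assumes "{f\<in>dual_cone K. norm f = 1} \<noteq> {}"
    and "\<And>f. f \<in> dual_cone K \<Longrightarrow> norm f = 1 \<Longrightarrow> \<rho> \<le> f \<bullet> d"
  shows "\<rho> \<le> dual_margin K d"
  unfolding dual_margin_def using assms by (intro cINF_greatest) auto

lemma dual_margin_lipschitz:
  assumes "{f\<in>dual_cone K. norm f = 1} \<noteq> {}"
  shows "1-lipschitz_on A (dual_margin K)"
proof (rule lipschitz_onI)
  have shift: "dual_margin K d \<le> dual_margin K d' + dist d d'" for d d'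
  proof -
    have "dual_margin K d - dist d d' \<le> dual_margin K d'"
    proof (rule dual_margin_greatest[OF assms])
      fix f assume f: "f \<in> dual_cone K" "norm f = 1"
      have "\<bar>f \<bullet> (d - d')\<bar> \<le> dist d d'"
        using Cauchy_Schwarz_ineq2[of f "d - d'"] f(2) by (simp add: dist_norm)
      then show "dual_margin K d - dist d d' \<le> f \<bullet> d'"
        using dual_margin_le[OF f, of d] by (simp add: inner_diff_right)
    qed
    then show ?thesis by simp
  qed
  show "dist (dual_margin K x) (dual_margin K y) \<le> 1 * dist x y" for x y
    using shift[of x y] shift[of y x] by (simp add: dist_real_def dist_commute abs_le_iff)
qed simp

lemma regular_cone_pointed:
  assumes "regular_cone K" "v \<in> K" "- v \<in> K"
  shows "v = 0"
proof -
  have "v \<in> uminus ` K" using assms(3) by (metis add.inverse_inverse image_eqI)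
  then show ?thesis using assms(1,2) by (auto simp: regular_cone_def)
qed

lemma regular_cone_ne_UNIV:
  fixes K :: "'a::euclidean_space set"
  assumes "regular_cone K"
  shows "K \<noteq> UNIV"
proof
  assume "K = UNIV"
  obtain b :: 'a where "b \<in> Basis" using nonempty_Basis by blast
  then show False using regular_cone_pointed[OF assms, of b] \<open>K = UNIV\<close> by auto
qed

lemma regular_cone_interior_nonzero:
  fixes K :: "'a::euclidean_space set"
  assumes "regular_cone K" "y \<in> interior K"
  shows "y \<noteq> 0"
proof
  assume "y = 0"
  obtain e where e: "e > 0" "ball 0 e \<subseteq> K" using assms(2) \<open>y = 0\<close> mem_interior by blast
  obtain b :: 'a where b: "b \<in> Basis" using nonempty_Basis by blast
  have "(e/2) *\<^sub>R b \<in> K" "- ((e/2) *\<^sub>R b) \<in> K" using e b by (auto intro!: subsetD[OF e(2)])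
  then show False using regular_cone_pointed[OF assms(1)] e(1) b by fastforce
qed

lemma regular_cone_dual_sphere_nonempty:
  assumes "regular_cone K"
  shows "{f\<in>dual_cone K. norm f = 1} \<noteq> {}"
proof -
  obtain z where "z \<notin> K" using regular_cone_ne_UNIV[OF assms] by blast
  with assms show ?thesis
    using dual_cone_separation[of K z] by (auto simp: regular_cone_def interior_empty)
qed

lemma Psi_attained:
  assumes "regular_cone K"
  shows "\<exists>d\<in>K. norm d = 1 \<and> dual_margin K d = Psi K \<and>
           (\<forall>d'\<in>K. norm d' = 1 \<longrightarrow> dual_margin K d' \<le> Psi K)"
proof -
  let ?D = "{d\<in>K. norm d = 1}"
  have compact: "compact ?D"
  proof -
    have "?D = K \<inter> sphere 0 1" by auto
    then show ?thesis using assms by (simp add: regular_cone_def closed_Int_compact)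
  qed
  have nonempty: "?D \<noteq> {}"
  proof -
    obtain y where y: "y \<in> interior K" using assms by (auto simp: regular_cone_def)
    then have "y /\<^sub>R norm y \<in> ?D"
      using assms regular_cone_interior_nonzero[OF assms y] interior_subset[of K]
      by (auto simp: regular_cone_def cone_def)
    then show ?thesis by blast
  qed
  have cont: "continuous_on ?D (dual_margin K)"
    using dual_margin_lipschitz[OF regular_cone_dual_sphere_nonempty[OF assms]]
    by (rule lipschitz_on_continuous_on)
  obtain d where d: "d \<in> ?D" "\<forall>d'\<in>?D. dual_margin K d' \<le> dual_margin K d"
    using continuous_attains_sup[OF compact nonempty cont] by blast
  have "Psi K = dual_margin K d"
    unfolding Psi_eq_SUP_dual_margin using d by (intro cSup_eq_maximum) blast+
  then show ?thesis using d by auto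
qed

lemma Psi_pos:
  assumes "regular_cone K"
  shows "Psi K > 0"
proof -
  obtain y where y: "y \<in> interior K" using assms by (auto simp: regular_cone_def)
  then obtain e where e: "e > 0" "ball y e \<subseteq> K" using mem_interior by blast
  have y0: "y \<noteq> 0" by (rule regular_cone_interior_nonzero[OF assms y])
  have "y \<in> K" using e by auto
  then have unit: "y /\<^sub>R norm y \<in> K" "norm (y /\<^sub>R norm y) = 1"
    using assms y0 by (auto simp: regular_cone_def cone_def)
  have "e / 2 / norm y \<le> dual_margin K (y /\<^sub>R norm y)"
  proof (rule dual_margin_greatest[OF regular_cone_dual_sphere_nonempty[OF assms]])
    fix f assume f: "f \<in> dual_cone K" "norm f = 1"
    have "y - (e/2) *\<^sub>R f \<in> K" using f e by (intro subsetD[OF e(2)]) (simp add: dist_norm)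
    then have "0 \<le> f \<bullet> (y - (e/2) *\<^sub>R f)" using f by (simp add: dual_cone_def inner_commute[of f])
    also have "\<dots> = f \<bullet> y - e/2" using f by (simp add: inner_diff_right dot_square_norm)
    finally show "e / 2 / norm y \<le> f \<bullet> (y /\<^sub>R norm y)" using y0 by (simp add: divide_simps)
  qed
  moreover have "0 < e / 2 / norm y" using e(1) y0 by simp
  moreover have "dual_margin K (y /\<^sub>R norm y) \<le> Psi K"
    using Psi_attained[OF assms] unit by blast
  ultimately show ?thesis by linarith
qed

lemma regular_cone_contains_cball:
  fixes K :: "'a::euclidean_space set"
  assumes "regular_cone K" "r \<ge> 0"
  shows "\<exists>c. norm c = r / Psi K \<and> cball c r \<subseteq> K"
proof -
  obtain d where d: "d \<in> K" "norm d = 1" "dual_margin K d = Psi K"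
    using Psi_attained[OF assms(1)] by blast
  have P: "Psi K > 0" by (rule Psi_pos[OF assms(1)])
  have "cball ((r / Psi K) *\<^sub>R d) r \<subseteq> K"
  proof (rule cball_subset_cone_if_dual_bound)
    fix f assume "f \<in> dual_cone K" "norm f = 1"
    then have "Psi K \<le> f \<bullet> d" using dual_margin_le d(3) by metis
    then have "r / Psi K * Psi K \<le> r / Psi K * (f \<bullet> d)"
      using assms(2) P by (intro mult_left_mono) auto
    then show "r \<le> f \<bullet> ((r / Psi K) *\<^sub>R d)" using P by simp
  qed (use assms(1) in \<open>auto simp: regular_cone_def interior_empty\<close>)
  then show ?thesis using d(2) assms(2) P by (intro exI[of _ "(r / Psi K) *\<^sub>R d"]) simp
qed

lemma rec_cone_add:
  assumes "x \<in> S" "v \<in> rec_cone S"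
  shows "x + v \<in> S"
proof -
  have "x + 1 *\<^sub>R v \<in> S" using assms zero_le_one unfolding rec_cone_def by blast
  then show ?thesis by simp
qed

lemma rec_cone_empty: "rec_cone {} = UNIV"
  by (simp add: rec_cone_def)

lemma exists_int_point_near:
  fixes y :: "real^'n"
  shows "\<exists>x\<in>int_points. norm (x - y) \<le> sqrt (real CARD('n)) / 2"
proof -
  define x :: "real^'n" where "x = (\<chi> i. of_int (round (y $ i)))"
  have "x \<in> int_points" by (simp add: x_def int_points_def)
  moreover have "norm (x - y) \<le> sqrt (real CARD('n)) / 2"
  proof -
    have "norm (x - y) = sqrt (\<Sum>i\<in>UNIV. (norm ((x - y) $ i))\<^sup>2)"
      by (simp add: norm_vec_def L2_set_def)
    also have "\<dots> \<le> sqrt (\<Sum>i\<in>(UNIV::'n set). (1/2)\<^sup>2)"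
    proof (intro real_sqrt_le_mono sum_mono power_mono)
      show "norm ((x - y) $ i) \<le> 1/2" for i
        using of_int_round_abs_le[of "y $ i"] by (simp add: x_def)
    qed simp
    also have "\<dots> = sqrt (real CARD('n)) / 2"
      by (simp add: real_sqrt_mult real_sqrt_divide power2_eq_square)
    finally show ?thesis .
  qed
  ultimately show ?thesis by blast
qed

lemma exists_int_point_within_Psi_bound:
  fixes S :: "(real^'n) set"
  assumes "regular_cone (rec_cone S)" "x\<^sub>0 \<in> S"
  shows "\<exists>x\<in>S \<inter> int_points.
           norm (x - x\<^sub>0) \<le> sqrt (real CARD('n)) / 2 * (1 / Psi (rec_cone S) + 1)"
proof -
  define r where "r = sqrt (real CARD('n)) / 2"
  obtain c where c: "norm c = r / Psi (rec_cone S)" "cball c r \<subseteq> rec_cone S"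
    using regular_cone_contains_cball[OF assms(1), of r] by (auto simp: r_def)
  obtain x where x: "x \<in> int_points" "norm (x - (x\<^sub>0 + c)) \<le> r"
    using exists_int_point_near[of "x\<^sub>0 + c"] by (auto simp: r_def)
  have "x - x\<^sub>0 \<in> cball c r" using x(2) by (simp add: dist_norm norm_minus_commute algebra_simps)
  then have "x\<^sub>0 + (x - x\<^sub>0) \<in> S" using rec_cone_add[OF assms(2)] c(2) by blast
  then have "x \<in> S" by simp
  have "norm (x - x\<^sub>0) \<le> norm (x - (x\<^sub>0 + c)) + norm c"
    by (metis diff_add_cancel diff_diff_eq norm_triangle_ineq)
  also have "\<dots> \<le> r + r / Psi (rec_cone S)" using x(2) c(1) by simp
  also have "\<dots> = r * (1 / Psi (rec_cone S) + 1)" by (simp add: algebra_simps)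
  finally show ?thesis using \<open>x \<in> S\<close> x(1) by (auto simp: r_def)
qed

lemma INF_inner_gap_le:
  fixes \<alpha> :: "'a::real_inner"
  assumes "S \<noteq> {}" "T \<subseteq> S" "bdd_below ((\<lambda>x. \<alpha> \<bullet> x) ` S)"
    and close: "\<And>x\<^sub>0. x\<^sub>0 \<in> S \<Longrightarrow> \<exists>x\<in>T. norm (x - x\<^sub>0) \<le> B"
  shows "(INF x\<in>T. \<alpha> \<bullet> x) - (INF x\<in>S. \<alpha> \<bullet> x) \<le> norm \<alpha> * B"
proof (rule field_le_epsilon)
  fix \<epsilon> :: real assume "\<epsilon> > 0"
  then have "(INF x\<in>S. \<alpha> \<bullet> x) < (INF x\<in>S. \<alpha> \<bullet> x) + \<epsilon>" by simp
  then obtain x\<^sub>0 where x\<^sub>0: "x\<^sub>0 \<in> S" "\<alpha> \<bullet> x\<^sub>0 < (INF x\<in>S. \<alpha> \<bullet> x) + \<epsilon>"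
    using cINF_less_iff[OF assms(1,3)] by blast
  obtain x where x: "x \<in> T" "norm (x - x\<^sub>0) \<le> B" using close[OF x\<^sub>0(1)] by blast
  have "(INF x\<in>T. \<alpha> \<bullet> x) \<le> \<alpha> \<bullet> x"
    using bdd_below_mono[OF assms(3) image_mono[OF assms(2)]] x(1) by (rule cINF_lower)
  also have "\<dots> = \<alpha> \<bullet> x\<^sub>0 + \<alpha> \<bullet> (x - x\<^sub>0)" by (simp add: inner_diff_right)
  also have "\<alpha> \<bullet> (x - x\<^sub>0) \<le> norm \<alpha> * norm (x - x\<^sub>0)"
    by (rule Cauchy_Schwarz_ineq2[THEN abs_le_D1])
  also have "\<dots> \<le> norm \<alpha> * B" using x(2) by (simp add: mult_left_mono)
  finally show "(INF x\<in>T. \<alpha> \<bullet> x) - (INF x\<in>S. \<alpha> \<bullet> x) \<le> norm \<alpha> * B + \<epsilon>"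
    using x\<^sub>0(2) by simp
qed

theorem theorem4p2:
  fixes S :: "(real^'n) set"
  assumes "convex S"
    and "regular_cone (rec_cone S)"
  shows "(\<forall>xh\<in>S.
            (INF x\<in>S \<inter> int_points. norm (x - xh))
               \<le> sqrt (real CARD('n)) / 2 * (1 / Psi (rec_cone S) + 1)
          \<and> (\<exists>x\<in>S \<inter> int_points.
               norm (x - xh) \<le> sqrt (real CARD('n)) / 2 * (1 / Psi (rec_cone S) + 1)))
       \<and> (\<forall>\<alpha>::real^'n. bdd_below ((\<lambda>x. \<alpha> \<bullet> x) ` S) \<longrightarrow>
            (INF x\<in>S \<inter> int_points. \<alpha> \<bullet> x) - (INF x\<in>S. \<alpha> \<bullet> x)
              \<le> norm \<alpha> * (sqrt (real CARD('n)) / 2 * (1 / Psi (rec_cone S) + 1)))"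
proof -
  let ?B = "sqrt (real CARD('n)) / 2 * (1 / Psi (rec_cone S) + 1)"
  have close: "\<exists>x\<in>S \<inter> int_points. norm (x - xh) \<le> ?B" if "xh \<in> S" for xh
    using exists_int_point_within_Psi_bound[OF assms(2) that] .
  have INF_le: "(INF x\<in>S \<inter> int_points. norm (x - xh)) \<le> ?B" if xh: "xh \<in> S" for xh
  proof -
    obtain x where "x \<in> S \<inter> int_points" "norm (x - xh) \<le> ?B" using close[OF xh] by blast
    moreover have "bdd_below ((\<lambda>x. norm (x - xh)) ` (S \<inter> int_points))"
      by (rule bdd_belowI2[where m=0]) simp
    ultimately show ?thesis by (blast intro: cINF_lower2)
  qed
  have "S \<noteq> {}" using regular_cone_ne_UNIV[OF assms(2)] rec_cone_empty by auto
  then have gap: "(INF x\<in>S \<inter> int_points. \<alpha> \<bullet> x) - (INF x\<in>S. \<alpha> \<bullet> x) \<le> norm \<alpha> * ?B"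
    if "bdd_below ((\<lambda>x. \<alpha> \<bullet> x) ` S)" for \<alpha> :: "real^'n"
    using that close by (intro INF_inner_gap_le) auto
  show ?thesis using INF_le close gap by (intro conjI ballI allI impI) simp_all
qed

end
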